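(* Let $g(x,y)=\sum_{i,j=-\infty}^{\infty}c(i,j)x^iy^j$ be a nonzero bilateral formal series with $g\perp g$, and let $f(x,y)$ be a bilateral formal series. Then $f\perp g$ if and only if there exist integers $m_0,k_0$ with $c(m_0,k_0)\neq 0$ and bilateral formal series $P(x)=\sum_{i=-\infty}^{\infty}p_ix^i$, $Q(x)=\sum_{i=-\infty}^{\infty}q_ix^i$ (with arbitrary complex coefficient sequences $p_i,q_i$) such that $$f(x,y)=\frac{1}{c(m_0,k_0)}\Big(P(x)\,[x^{m_0}]g(x,y)-Q(x)\,[x^{k_0}]g(x,y)\Big),$$ where $[x^{m}]g(x,y)=\sum_{j=-\infty}^{\infty}c(m,j)y^j$ denotes the coefficient of $x^{m}$ in $g(x,y)$.
   Context: A bilateral formal series in $x,y$ is a formal expression $\sum_{i,j\in\mathbb{Z}}\lambda(i,j)x^iy^j$ with complex coefficients. For two such series $f,g$, the expression $g(u,v)f(z,w)-g(u,w)f(z,v)+g(v,w)f(z,u)$ is a well-defined formal series in four independent variables $u,v,w,z$. One writes $f\perp g$ if this expression is identically zero. *)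

theory Defs
  imports Complex_Main
begin

text \<open>A bilateral formal series sum over i,j in Z of lambda(i,j) x^i y^j is represented
by its coefficient function. A one-variable bilateral series is a function int => complex.\<close>

type_synonym bseries2 = "int \<Rightarrow> int \<Rightarrow> complex"
type_synonym bseries1 = "int \<Rightarrow> complex"

text \<open>The coefficient of u^a v^b w^c z^d in g(u,v)f(z,w) - g(u,w)f(z,v) + g(v,w)f(z,u)
is g(a,b)f(d,c) - g(a,c)f(d,b) + g(b,c)f(d,a).  f is orthogonal to g iff all vanish.\<close>

definition perp :: "bseries2 \<Rightarrow> bseries2 \<Rightarrow> bool" where
  "perp f g \<longleftrightarrow> (\<forall>a b c d.
      g a b * f d c - g a c * f d b + g b c * f d a = 0)"

definition xcoeff :: "bseries2 \<Rightarrow> int \<Rightarrow> bseries1" where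
  "xcoeff g m = (\<lambda>j. g m j)"

definition sepmul :: "bseries1 \<Rightarrow> bseries1 \<Rightarrow> bseries2" where
  "sepmul P h = (\<lambda>i j. P i * h j)"

end

theory Submission
  imports Defs
begin

text \<open>The relation \<^prop>\<open>perp f g\<close> is linear in \<open>f\<close>, and \<^prop>\<open>perp g g\<close> says precisely
that every product \<open>P(x) [x\<^sup>m]g(x,y)\<close> is orthogonal to \<open>g\<close>; this gives one direction.
Conversely, if \<open>g(m\<^sub>0,k\<^sub>0) \<noteq> 0\<close>, the instance \<open>a = m\<^sub>0\<close>, \<open>b = k\<^sub>0\<close> of \<^prop>\<open>perp f g\<close> can be
solved for \<open>f(d,c)\<close>, which expresses \<open>f\<close> through the two rows \<open>[x^m\<^sub>0]g\<close> and
\<open>[x^k\<^sub>0]g\<close> with \<open>P = f(\<cdot>,k\<^sub>0)\<close> and \<open>Q = f(\<cdot>,m\<^sub>0)\<close>.\<close>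

lemma perp_diff:
  assumes "perp f g" and "perp h g"
  shows "perp (\<lambda>i j. f i j - h i j) g"
  using assms unfolding perp_def by (simp add: algebra_simps)

lemma perp_divide:
  assumes "perp f g"
  shows "perp (\<lambda>i j. f i j / c) g"
proof -
  have "g a b * (f d c' / c) - g a c' * (f d b / c) + g b c' * (f d a / c)
      = (g a b * f d c' - g a c' * f d b + g b c' * f d a) / c" for a b c' d
    by (simp add: diff_divide_distrib add_divide_distrib)
  then show ?thesis
    using assms unfolding perp_def by simp
qed

lemma perp_sepmul_xcoeff:
  assumes "perp g g"
  shows "perp (sepmul P (xcoeff g m)) g"
  unfolding perp_def
proof (intro allI)
  fix a b c d
  have "g a b * g m c - g a c * g m b + g b c * g m a = 0"
    using assms unfolding perp_def by blast
  then have "P d * (g a b * g m c - g a c * g m b + g b c * g m a) = 0"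
    by simp
  then show "g a b * sepmul P (xcoeff g m) d c - g a c * sepmul P (xcoeff g m) d b
      + g b c * sepmul P (xcoeff g m) d a = 0"
    unfolding sepmul_def xcoeff_def by (simp add: algebra_simps)
qed

lemma perp_eq_sepmul_xcoeff:
  assumes "perp f g" and "g m0 k0 \<noteq> 0"
  shows "f = (\<lambda>i j. (sepmul (\<lambda>i. f i k0) (xcoeff g m0) i j
                    - sepmul (\<lambda>i. f i m0) (xcoeff g k0) i j) / g m0 k0)"
proof (intro ext)
  fix i j
  have "g m0 k0 * f i j - g m0 j * f i k0 + g k0 j * f i m0 = 0"
    using assms(1) unfolding perp_def by blast
  then show "f i j = (sepmul (\<lambda>i. f i k0) (xcoeff g m0) i j
                    - sepmul (\<lambda>i. f i m0) (xcoeff g k0) i j) / g m0 k0"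
    using assms(2) unfolding sepmul_def xcoeff_def by (simp add: field_simps)
qed

theorem theorem2p2:
  fixes f g :: bseries2
  assumes "g \<noteq> (\<lambda>_ _. 0)"
    and "perp g g"
  shows "perp f g \<longleftrightarrow>
    (\<exists>(m0::int) (k0::int) (P::bseries1) (Q::bseries1). g m0 k0 \<noteq> 0 \<and>
       f = (\<lambda>i j. (sepmul P (xcoeff g m0) i j - sepmul Q (xcoeff g k0) i j) / g m0 k0))"
proof
  assume "perp f g"
  obtain m0 k0 where "g m0 k0 \<noteq> 0"
    using assms(1) by blast
  with perp_eq_sepmul_xcoeff[OF \<open>perp f g\<close>] show "\<exists>m0 k0 P Q. g m0 k0 \<noteq> 0 \<and>
       f = (\<lambda>i j. (sepmul P (xcoeff g m0) i j - sepmul Q (xcoeff g k0) i j) / g m0 k0)"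
    by blast
next
  assume "\<exists>m0 k0 P Q. g m0 k0 \<noteq> 0 \<and>
       f = (\<lambda>i j. (sepmul P (xcoeff g m0) i j - sepmul Q (xcoeff g k0) i j) / g m0 k0)"
  then obtain m0 k0 P Q where
    f_eq: "f = (\<lambda>i j. (sepmul P (xcoeff g m0) i j - sepmul Q (xcoeff g k0) i j) / g m0 k0)"
    by blast
  show "perp f g"
    unfolding f_eq
    by (intro perp_divide perp_diff perp_sepmul_xcoeff assms(2))
qed

end
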